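(* Let $G$ be a graph with a cut-vertex $v$ such that $G-\{v\}$ is the disjoint union $G_1\cup G_2$ of two graphs (with no edges between $G_1$ and $G_2$; $G_1,G_2$ need not be connected) and $v$ has at least two neighbours in $G_1$ and at least two neighbours in $G_2$. Then $G\notin\mathcal{G}^{\rm SSP}$.
   Context: All graphs are finite, simple, undirected. For a graph $G$ on $\{1,\ldots,n\}$, $\mathcal{S}(G)$ is the set of real symmetric $n\times n$ matrices $A=(a_{ij})$ with $a_{ij}\neq0$ iff $\{i,j\}\in E(G)$ for $i\neq j$ (diagonal arbitrary). A real symmetric $A$ has the strong spectral property (SSP) if the only real symmetric $X$ with $A\circ X=0$, $I\circ X=0$, $AX-XA=0$ is $X=0$ ($\circ$ = entrywise product). $\mathcal{G}^{\rm SSP}$ is the set of graphs $G$ such that every matrix in $\mathcal{S}(G)$ has the SSP. *)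

theory Defs
  imports "HOL-Analysis.Analysis"
begin

text \<open>A finite simple graph on the vertex type 'n (a finite type standing for {1..n})
  is given by a symmetric irreflexive adjacency relation.\<close>
definition simple_graph :: "('n::finite \<Rightarrow> 'n \<Rightarrow> bool) \<Rightarrow> bool" where
  "simple_graph E \<longleftrightarrow> (\<forall>i j. E i j \<longleftrightarrow> E j i) \<and> (\<forall>i. \<not> E i i)"

definition sym_mat :: "real^'n^'n \<Rightarrow> bool" where
  "sym_mat A \<longleftrightarrow> transpose A = A"

definition S_graph :: "('n::finite \<Rightarrow> 'n \<Rightarrow> bool) \<Rightarrow> (real^'n^'n) set" where
  "S_graph E = {A. sym_mat A \<and> (\<forall>i j. i \<noteq> j \<longrightarrow> (A$i$j \<noteq> 0 \<longleftrightarrow> E i j))}"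

definition SSP :: "real^'n^'n \<Rightarrow> bool" where
  "SSP A \<longleftrightarrow> (\<forall>X::real^'n^'n. sym_mat X \<and> (\<forall>i j. A$i$j * X$i$j = 0)
        \<and> (\<forall>i. X$i$i = 0) \<and> A ** X - X ** A = 0 \<longrightarrow> X = 0)"

definition in_G_SSP :: "('n::finite \<Rightarrow> 'n \<Rightarrow> bool) \<Rightarrow> bool" where
  "in_G_SSP E \<longleftrightarrow> (\<forall>A \<in> S_graph E. SSP A)"

end

theory Submission
  imports Defs
begin

text \<open>Let \<open>x\<close> and \<open>y\<close> be null vectors of \<open>A \<in> S(G)\<close> supported on \<open>V\<^sub>1\<close> and \<open>V\<^sub>2\<close>
  respectively. Then \<open>X = x y\<^sup>T + y x\<^sup>T\<close> is a nonzero symmetric matrix supported on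
  \<open>V\<^sub>1 \<times> V\<^sub>2 \<union> V\<^sub>2 \<times> V\<^sub>1\<close>, a set of non-edges off the diagonal, and \<open>A X = 0 = X A\<close>;
  so \<open>A\<close> fails the SSP. Such an \<open>A\<close> is the adjacency matrix of \<open>G\<close> with a suitable
  diagonal: take weights \<open>x\<close> nonzero on all of \<open>V\<^sub>1\<close> that sum to zero over the (at least
  two) neighbours of \<open>v\<close> in \<open>V\<^sub>1\<close>, similarly \<open>y\<close> on \<open>V\<^sub>2\<close>, and choose each diagonal
  entry on \<open>V\<^sub>1\<close> (resp. \<open>V\<^sub>2\<close>) to cancel the corresponding row of \<open>A x\<close> (resp. \<open>A y\<close>).\<close>

lemma not_SSP_if_null_vectors_disjoint_support:
  fixes A :: "real^'n^'n" and x y :: "real^'n"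
  assumes "sym_mat A" and "A *v x = 0" and "A *v y = 0"
    and supp: "\<And>i j. x$i \<noteq> 0 \<Longrightarrow> y$j \<noteq> 0 \<Longrightarrow> i \<noteq> j \<and> A$i$j = 0"
    and "x \<noteq> 0" and "y \<noteq> 0"
  shows "\<not> SSP A"
proof -
  define X :: "real^'n^'n" where "X = (\<chi> i j. x$i * y$j + y$i * x$j)"
  have A_sym: "A$k$j = A$j$k" for j k
    using \<open>sym_mat A\<close> unfolding sym_mat_def by (metis transpose_def vec_lambda_beta)
  have xy_disjoint: "x$i * y$i = 0" for i
    using supp by fastforce
  have "sym_mat X"
    unfolding sym_mat_def X_def by (auto simp: vec_eq_iff transpose_def)
  moreover have "A$i$j * X$i$j = 0" for i j
    using supp[of i j] supp[of j i] A_sym[of i j] xy_disjoint[of i]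
    by (cases "x$i = 0"; cases "y$i = 0"; auto simp: X_def)
  moreover have "X$i$i = 0" for i
    using xy_disjoint[of i] by (simp add: X_def mult.commute)
  moreover have "A ** X - X ** A = 0"
  proof -
    have "(A ** X)$i$j = (A *v x)$i * y$j + (A *v y)$i * x$j" for i j
      by (simp add: X_def matrix_matrix_mult_def matrix_vector_mult_def
          sum_distrib_left sum_distrib_right sum.distrib ring_distribs mult_ac)
    moreover have "(X ** A)$i$j = x$i * (A *v y)$j + y$i * (A *v x)$j" for i j
      by (simp add: X_def matrix_matrix_mult_def matrix_vector_mult_def A_sym
          sum_distrib_left sum_distrib_right sum.distrib ring_distribs mult_ac)
    ultimately show ?thesis
      using assms(2,3) by (simp add: vec_eq_iff)
  qed
  moreover have "X \<noteq> 0"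
  proof -
    obtain p q where "x$p \<noteq> 0" "y$q \<noteq> 0"
      using \<open>x \<noteq> 0\<close> \<open>y \<noteq> 0\<close> by (metis vec_eq_iff zero_index)
    moreover have "y$p = 0"
      using supp[of p p] \<open>x$p \<noteq> 0\<close> by blast
    ultimately have "X$p$q \<noteq> 0"
      by (simp add: X_def)
    then show ?thesis
      by auto
  qed
  ultimately have "\<not> (sym_mat X \<and> (\<forall>i j. A$i$j * X$i$j = 0) \<and> (\<forall>i. X$i$i = 0)
      \<and> A ** X - X ** A = 0 \<longrightarrow> X = 0)"
    by blast
  then show ?thesis
    unfolding SSP_def by blast
qed

definition graph_matrix :: "('n::finite \<Rightarrow> 'n \<Rightarrow> bool) \<Rightarrow> ('n \<Rightarrow> real) \<Rightarrow> real^'n^'n" where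
  "graph_matrix E d = (\<chi> i j. if i = j then d i else if E i j then 1 else 0)"

lemma graph_matrix_in_S_graph:
  assumes "simple_graph E"
  shows "graph_matrix E d \<in> S_graph E"
  using assms
  unfolding S_graph_def sym_mat_def graph_matrix_def simple_graph_def
  by (auto simp: vec_eq_iff transpose_def)

lemma graph_matrix_mulv_nth:
  assumes "simple_graph E"
  shows "(graph_matrix E d *v x)$i = d i * x$i + (\<Sum>k\<in>{k. E i k}. x$k)"
proof -
  have "(graph_matrix E d *v x)$i
      = (\<Sum>k\<in>UNIV. (if k = i then d i * x$i else 0) + (if E i k then x$k else 0))"
    using assms unfolding simple_graph_def graph_matrix_def matrix_vector_mult_def
    by (auto intro!: sum.cong)
  also have "\<dots> = d i * x$i + (\<Sum>k\<in>{k. E i k}. x$k)"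
    by (simp add: sum.distrib sum.inter_filter[symmetric])
  finally show ?thesis .
qed

lemma graph_matrix_mulv_eq_0_on_side:
  assumes "simple_graph E"
    and "V \<union> W = UNIV - {v}" and no_edges: "\<forall>i\<in>V. \<forall>j\<in>W. \<not> E i j"
    and x_supp: "\<And>i. i \<notin> V \<Longrightarrow> x$i = 0"
    and balanced: "(\<Sum>k\<in>{u \<in> V. E v u}. x$k) = 0"
    and diag: "\<And>i. i \<in> V \<Longrightarrow> d i * x$i + (\<Sum>k\<in>{k. E i k}. x$k) = 0"
  shows "graph_matrix E d *v x = 0"
proof -
  have E_sym: "E i j \<longleftrightarrow> E j i" for i j
    using assms(1) unfolding simple_graph_def by blast
  have nbr_sum_on_V: "(\<Sum>k\<in>{k. E i k}. x$k) = (\<Sum>k\<in>{u \<in> V. E i u}. x$k)" for i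
    using x_supp by (intro sum.mono_neutral_right) auto
  have "(graph_matrix E d *v x)$i = 0" for i
  proof -
    consider "i = v" | "i \<in> V" | "i \<in> W" "i \<notin> V"
      using assms(2) by blast
    then show ?thesis
    proof cases
      case 1
      then show ?thesis
        using x_supp[of v] assms(2) balanced nbr_sum_on_V[of v]
        by (auto simp: graph_matrix_mulv_nth[OF assms(1)])
    next
      case 2
      then show ?thesis
        using diag by (simp add: graph_matrix_mulv_nth[OF assms(1)])
    next
      case 3
      then have "{u \<in> V. E i u} = {}"
        using no_edges E_sym by auto
      then have "(\<Sum>k\<in>{k. E i k}. x$k) = 0"
        using nbr_sum_on_V[of i] by (metis sum.empty)
      then show ?thesis
        using x_supp[of i] \<open>i \<notin> V\<close>
        by (simp add: graph_matrix_mulv_nth[OF assms(1)])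
    qed
  qed
  then show ?thesis
    by (simp add: vec_eq_iff)
qed

text \<open>The weights are \<open>1\<close> on \<open>V - {p}\<close> and \<open>1 - |N|\<close> at one \<open>p \<in> N\<close>; the latter is
  nonzero precisely because \<open>|N| \<ge> 2\<close>.\<close>

lemma exists_nonzero_on_with_zero_sum:
  fixes N V :: "'n::finite set"
  assumes "N \<subseteq> V" and "card N \<ge> 2"
  obtains x :: "real^'n" where "\<And>i. x$i \<noteq> 0 \<longleftrightarrow> i \<in> V" and "(\<Sum>k\<in>N. x$k) = 0"
proof -
  obtain p where "p \<in> N"
    using assms(2) by fastforce
  define x :: "real^'n" where
    "x = (\<chi> i. if i = p then 1 - real (card N) else if i \<in> V then 1 else 0)"
  have "x$i \<noteq> 0 \<longleftrightarrow> i \<in> V" for i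
    using assms \<open>p \<in> N\<close> by (auto simp: x_def)
  moreover have "(\<Sum>k\<in>N. x$k) = 0"
  proof -
    have "(\<Sum>k\<in>N. x$k) = x$p + (\<Sum>k\<in>N - {p}. x$k)"
      using \<open>p \<in> N\<close> by (simp add: sum.remove)
    also have "(\<Sum>k\<in>N - {p}. x$k) = (\<Sum>k\<in>N - {p}. 1)"
      using assms(1) by (intro sum.cong) (auto simp: x_def)
    also have "\<dots> = real (card N) - 1"
      using assms(2) \<open>p \<in> N\<close> by (simp add: card_Diff_singleton of_nat_diff)
    finally show ?thesis
      by (simp add: x_def)
  qed
  ultimately show ?thesis
    using that by blast
qed

definition cancelling_diag :: "('n::finite \<Rightarrow> 'n \<Rightarrow> bool) \<Rightarrow> real^'n \<Rightarrow> 'n \<Rightarrow> real" where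
  "cancelling_diag E x i = - (\<Sum>k\<in>{k. E i k}. x$k) / x$i"

lemma obtain_null_vector_on_side:
  fixes E :: "'n::finite \<Rightarrow> 'n \<Rightarrow> bool"
  assumes "simple_graph E"
    and "V \<union> W = UNIV - {v}" and "\<forall>i\<in>V. \<forall>j\<in>W. \<not> E i j"
    and "card {u \<in> V. E v u} \<ge> 2"
  obtains x where "\<And>i. x$i \<noteq> 0 \<longleftrightarrow> i \<in> V" and "x \<noteq> 0"
    and "\<And>d. (\<And>i. i \<in> V \<Longrightarrow> d i = cancelling_diag E x i) \<Longrightarrow> graph_matrix E d *v x = 0"
proof -
  obtain x :: "real^'n" where x_supp: "\<And>i. x$i \<noteq> 0 \<longleftrightarrow> i \<in> V"
    and balanced: "(\<Sum>k\<in>{u \<in> V. E v u}. x$k) = 0"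
    using exists_nonzero_on_with_zero_sum[OF _ assms(4)] by blast
  obtain p where "p \<in> V"
    using assms(4) by fastforce
  then have "x \<noteq> 0"
    using x_supp[of p] by auto
  moreover have "graph_matrix E d *v x = 0" if "\<And>i. i \<in> V \<Longrightarrow> d i = cancelling_diag E x i" for d
  proof (rule graph_matrix_mulv_eq_0_on_side[OF assms(1-3) _ balanced])
    show "x$i = 0" if "i \<notin> V" for i
      using x_supp[of i] that by blast
    show "d i * x$i + (\<Sum>k\<in>{k. E i k}. x$k) = 0" if "i \<in> V" for i
      using x_supp[of i] that \<open>i \<in> V \<Longrightarrow> d i = cancelling_diag E x i\<close>
      by (simp add: cancelling_diag_def)
  qed
  ultimately show ?thesis
    using that x_supp by blast
qed

theorem corollary2p6:
  fixes E :: "'n::finite \<Rightarrow> 'n \<Rightarrow> bool" and v :: 'n and V1 V2 :: "'n set"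
  assumes "simple_graph E"
    and "V1 \<inter> V2 = {}" and "V1 \<union> V2 = UNIV - {v}"
    and "\<forall>x\<in>V1. \<forall>y\<in>V2. \<not> E x y"
    and "card {u \<in> V1. E v u} \<ge> 2" and "card {u \<in> V2. E v u} \<ge> 2"
  shows "\<not> in_G_SSP E"
proof -
  have "V2 \<union> V1 = UNIV - {v}" and "\<forall>i\<in>V2. \<forall>j\<in>V1. \<not> E i j"
    using assms(1,3,4) unfolding simple_graph_def by blast+
  obtain x where x_supp: "\<And>i. x$i \<noteq> 0 \<longleftrightarrow> i \<in> V1" and "x \<noteq> 0"
    and x_null: "\<And>d. (\<And>i. i \<in> V1 \<Longrightarrow> d i = cancelling_diag E x i) \<Longrightarrow> graph_matrix E d *v x = 0"
    using obtain_null_vector_on_side[OF assms(1,3,4,5)] by blast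
  obtain y where y_supp: "\<And>i. y$i \<noteq> 0 \<longleftrightarrow> i \<in> V2" and "y \<noteq> 0"
    and y_null: "\<And>d. (\<And>i. i \<in> V2 \<Longrightarrow> d i = cancelling_diag E y i) \<Longrightarrow> graph_matrix E d *v y = 0"
    using obtain_null_vector_on_side[OF assms(1) \<open>V2 \<union> V1 = _\<close> \<open>\<forall>i\<in>V2. _\<close> assms(6)] by blast
  define A where
    "A = graph_matrix E (\<lambda>i. if i \<in> V1 then cancelling_diag E x i else cancelling_diag E y i)"
  have "A *v x = 0" and "A *v y = 0"
    unfolding A_def using assms(2) by (auto intro!: x_null y_null)
  have "A \<in> S_graph E"
    unfolding A_def by (rule graph_matrix_in_S_graph[OF assms(1)])
  have supports_apart: "i \<noteq> j \<and> A$i$j = 0" if "x$i \<noteq> 0" "y$j \<noteq> 0" for i j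
  proof -
    have "i \<noteq> j" "\<not> E i j"
      using x_supp[of i] y_supp[of j] that assms(2,4) by auto
    then show ?thesis
      using \<open>A \<in> S_graph E\<close> unfolding S_graph_def by auto
  qed
  have "sym_mat A"
    using \<open>A \<in> S_graph E\<close> unfolding S_graph_def by blast
  then have "\<not> SSP A"
    using \<open>A *v x = 0\<close> \<open>A *v y = 0\<close> supports_apart \<open>x \<noteq> 0\<close> \<open>y \<noteq> 0\<close>
    by (rule not_SSP_if_null_vectors_disjoint_support)
  then show ?thesis
    unfolding in_G_SSP_def using \<open>A \<in> S_graph E\<close> by blast
qed

end
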